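(* Let $a,b,e\in\mathbb{R}$ and let $\alpha_i(t)$ ($i=1,\dots,5$) be scalar continuous functions (not necessarily odd). Consider the systems $$\text{(S5)}\quad\begin{aligned}\dot x&=(ax+by+xz)(1+\alpha_1(t))+x(a+z)\alpha_2(t)+y\alpha_3(t),\\ \dot y&=(-bx+ay+yz)(1+\alpha_1(t))+y(a+z)\alpha_2(t)-x\alpha_3(t),\\ \dot z&=(ez-x^2-y^2-z^2)(1+\alpha_1(t)+\alpha_2(t));\end{aligned}$$ $$\text{(S6)}\quad\begin{aligned}\dot x&=(ax+by+xz)(1+\alpha_1(t))+x(a+z)\alpha_2(t)+y\alpha_3(t)-y(x^2+y^2)(4az+x^2+y^2+2z^2)\alpha_4(t),\\ \dot y&=(-bx+ay+yz)(1+\alpha_1(t))+y(a+z)\alpha_2(t)-x\alpha_3(t)+x(x^2+y^2)(4az+x^2+y^2+2z^2)\alpha_4(t),\\ \dot z&=-(2az+x^2+y^2+z^2)(1+\alpha_1(t)+\alpha_2(t));\end{aligned}$$ $$\text{(S7)}\quad\begin{aligned}\dot x&=(ax+xz)(1+\alpha_1(t))+y\alpha_2(t)+y(4az+x^2+y^2+2z^2)\big(x^2\alpha_3(t)+xy\alpha_4(t)+y^2\alpha_5(t)\big),\\ \dot y&=(ay+yz)(1+\alpha_1(t))-x\alpha_2(t)-x(4az+x^2+y^2+2z^2)\big(x^2\alpha_3(t)+xy\alpha_4(t)+y^2\alpha_5(t)\big),\\ \dot z&=-(2az+x^2+y^2+z^2)(1+\alpha_1(t)).\end{aligned}$$ (i)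 If $e=0$ and there is a constant $l>-1$ with $\alpha_1(t)+\alpha_2(t)\ge l$ for all $t\ge0$, then the solution $x=y=z=0$ of (S5) is unstable in the sense of Lyapunov. (ii) If $a=0$ and there is a constant $l>-1$ with $\alpha_1(t)+\alpha_2(t)\ge l$ for all $t\ge0$, then the solution $x=y=z=0$ of (S6) is unstable in the sense of Lyapunov. (iii) If $a=0$ and there is a constant $l>-1$ with $\alpha_1(t)\ge l$ for all $t\ge0$, then the solution $x=y=z=0$ of (S7) is unstable in the sense of Lyapunov. *)

theory Defs
  imports "HOL-Analysis.Analysis"
begin

type_synonym state = "real \<times> real \<times> real"

definition is_solution ::
  "(real \<Rightarrow> state \<Rightarrow> state) \<Rightarrow> real \<Rightarrow> state \<Rightarrow> real set \<Rightarrow> (real \<Rightarrow> state) \<Rightarrow> bool" where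
  "is_solution f t0 x0 J x \<longleftrightarrow>
     is_interval J \<and> t0 \<in> J \<and> J \<subseteq> {t0..} \<and> x t0 = x0 \<and>
     (\<forall>t\<in>J. (x has_vector_derivative f t (x t)) (at t within J))"

definition lyapunov_stable :: "(real \<Rightarrow> state \<Rightarrow> state) \<Rightarrow> bool" where
  "lyapunov_stable f \<longleftrightarrow>
     (\<forall>t0\<ge>0. \<forall>\<epsilon>>0. \<exists>\<delta>>0. \<forall>x0 J x.
        norm x0 < \<delta> \<and> is_solution f t0 x0 J x \<longrightarrow> (\<forall>t\<in>J. norm (x t) < \<epsilon>))"

definition S5 :: "real \<Rightarrow> real \<Rightarrow> real \<Rightarrow> (real \<Rightarrow> real) \<Rightarrow> (real \<Rightarrow> real) \<Rightarrow> (real \<Rightarrow> real)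
   \<Rightarrow> real \<Rightarrow> state \<Rightarrow> state" where
  "S5 a b e \<alpha>1 \<alpha>2 \<alpha>3 t p = (case p of (x, y, z) \<Rightarrow>
     ((a*x + b*y + x*z) * (1 + \<alpha>1 t) + x*(a + z)*\<alpha>2 t + y*\<alpha>3 t,
      (-b*x + a*y + y*z) * (1 + \<alpha>1 t) + y*(a + z)*\<alpha>2 t - x*\<alpha>3 t,
      (e*z - x^2 - y^2 - z^2) * (1 + \<alpha>1 t + \<alpha>2 t)))"

definition S6 :: "real \<Rightarrow> real \<Rightarrow> (real \<Rightarrow> real) \<Rightarrow> (real \<Rightarrow> real) \<Rightarrow> (real \<Rightarrow> real)
   \<Rightarrow> (real \<Rightarrow> real) \<Rightarrow> real \<Rightarrow> state \<Rightarrow> state" where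
  "S6 a b \<alpha>1 \<alpha>2 \<alpha>3 \<alpha>4 t p = (case p of (x, y, z) \<Rightarrow>
     ((a*x + b*y + x*z) * (1 + \<alpha>1 t) + x*(a + z)*\<alpha>2 t + y*\<alpha>3 t
        - y*(x^2 + y^2)*(4*a*z + x^2 + y^2 + 2*z^2)*\<alpha>4 t,
      (-b*x + a*y + y*z) * (1 + \<alpha>1 t) + y*(a + z)*\<alpha>2 t - x*\<alpha>3 t
        + x*(x^2 + y^2)*(4*a*z + x^2 + y^2 + 2*z^2)*\<alpha>4 t,
      -(2*a*z + x^2 + y^2 + z^2) * (1 + \<alpha>1 t + \<alpha>2 t)))"

definition S7 :: "real \<Rightarrow> (real \<Rightarrow> real) \<Rightarrow> (real \<Rightarrow> real) \<Rightarrow> (real \<Rightarrow> real) \<Rightarrow> (real \<Rightarrow> real)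
   \<Rightarrow> (real \<Rightarrow> real) \<Rightarrow> real \<Rightarrow> state \<Rightarrow> state" where
  "S7 a \<alpha>1 \<alpha>2 \<alpha>3 \<alpha>4 \<alpha>5 t p = (case p of (x, y, z) \<Rightarrow>
     ((a*x + x*z) * (1 + \<alpha>1 t) + y*\<alpha>2 t
        + y*(4*a*z + x^2 + y^2 + 2*z^2)*(x^2*\<alpha>3 t + x*y*\<alpha>4 t + y^2*\<alpha>5 t),
      (a*y + y*z) * (1 + \<alpha>1 t) - x*\<alpha>2 t
        - x*(4*a*z + x^2 + y^2 + 2*z^2)*(x^2*\<alpha>3 t + x*y*\<alpha>4 t + y^2*\<alpha>5 t),
      -(2*a*z + x^2 + y^2 + z^2) * (1 + \<alpha>1 t)))"

end

theory Submission
  imports Defs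
begin

text \<open>In all three systems the z-axis is invariant, and on it the equation reduces to the
  Riccati equation z' = - z^2 c(t) with c(t) \<ge> 1 + l > 0 for t \<ge> 0. Its explicit solution
  z(t) = 1 / (C(t) - 1/d), where C(t) is the integral of c over [0, t] and z(0) = -d, runs off
  to -\<infinity> in finite time; so arbitrarily small initial values on the negative z-axis still
  reach the point (0, 0, -1).\<close>

lemma riccati_explicit_solution:
  fixes c :: "real \<Rightarrow> real"
  assumes c: "continuous_on {t0..T} c"
    and denom: "\<forall>t\<in>{t0..T}. integral {t0..t} c + 1/z0 \<noteq> 0"
  defines "z \<equiv> \<lambda>t. 1 / (integral {t0..t} c + 1/z0)"
  shows "z t0 = z0"
    and "\<forall>t\<in>{t0..T}. (z has_real_derivative - (z t)\<^sup>2 * c t) (at t within {t0..T})"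
proof -
  show "z t0 = z0" by (simp add: z_def)
  show "\<forall>t\<in>{t0..T}. (z has_real_derivative - (z t)\<^sup>2 * c t) (at t within {t0..T})"
  proof
    fix t assume t: "t \<in> {t0..T}"
    have "((\<lambda>t. integral {t0..t} c) has_real_derivative c t) (at t within {t0..T})"
      using integral_has_vector_derivative[OF c t]
      by (simp add: has_real_derivative_iff_has_vector_derivative)
    then show "(z has_real_derivative - (z t)\<^sup>2 * c t) (at t within {t0..T})"
      unfolding z_def using denom t
      by (auto intro!: derivative_eq_intros simp: power2_eq_square)
  qed
qed

lemma integral_ge_linear:
  fixes c :: "real \<Rightarrow> real"
  assumes c: "continuous_on {0..} c" and ge: "\<forall>t\<ge>0. c t \<ge> m" and "T \<ge> 0"
  shows "integral {0..T} c \<ge> m * T"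
proof -
  have "integral {0..T} (\<lambda>_. m) \<le> integral {0..T} c"
    using ge c by (intro integral_le integrable_continuous_interval)
      (auto elim: continuous_on_subset)
  then show ?thesis using \<open>T \<ge> 0\<close> by (simp add: mult.commute)
qed

lemma integral_reaches_level:
  fixes c :: "real \<Rightarrow> real"
  assumes c: "continuous_on {0..} c" and "m > 0" and c_ge: "\<forall>t\<ge>0. c t \<ge> m" and "L \<ge> 0"
  obtains T where "T \<ge> 0" "integral {0..T} c = L" "\<forall>t\<in>{0..T}. integral {0..t} c \<le> L"
proof -
  define C where "C t = integral {0..t} c" for t
  have c_on: "continuous_on {0..T} c" for T using c by (rule continuous_on_subset) auto
  define K where "K = L / m"
  have "K \<ge> 0" "C K \<ge> L"
    using integral_ge_linear[OF c c_ge, of K] \<open>m > 0\<close> \<open>L \<ge> 0\<close> by (auto simp: K_def C_def)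
  moreover have "continuous_on {0..K} C"
    unfolding C_def by (intro indefinite_integral_continuous_1 integrable_continuous_interval c_on)
  moreover have "C 0 \<le> L" using \<open>L \<ge> 0\<close> by (simp add: C_def)
  ultimately obtain T where T: "0 \<le> T" "C T = L"
    using IVT'[of C 0 L K] by auto
  have "C t \<le> C T" if "t \<in> {0..T}" for t
    unfolding C_def using that c_ge \<open>m > 0\<close>
    by (intro integral_subset_le integrable_continuous_interval c_on) force+
  with T that show ?thesis by (simp add: C_def)
qed

lemma not_lyapunov_stable_if_riccati_on_z_axis:
  fixes f :: "real \<Rightarrow> state \<Rightarrow> state" and c :: "real \<Rightarrow> real"
  assumes c: "continuous_on {0..} c" and "m > 0" and c_ge: "\<forall>t\<ge>0. c t \<ge> m"
    and axis: "\<forall>t z. f t (0, 0, z) = (0, 0, - z\<^sup>2 * c t)"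
  shows "\<not> lyapunov_stable f"
proof
  assume "lyapunov_stable f"
  then obtain \<delta> where "\<delta> > 0" and stable:
    "\<And>x0 J x. norm x0 < \<delta> \<Longrightarrow> is_solution f 0 x0 J x \<Longrightarrow> \<forall>t\<in>J. norm (x t) < 1"
    unfolding lyapunov_stable_def by (metis order_refl zero_less_one)
  define d where "d = min \<delta> 1 / 2"
  have d: "0 < d" "d < \<delta>" "d < 1" using \<open>\<delta> > 0\<close> by (auto simp: d_def)
  obtain T where T: "T \<ge> 0" "integral {0..T} c = 1/d - 1"
    and below: "\<forall>t\<in>{0..T}. integral {0..t} c \<le> 1/d - 1"
    using integral_reaches_level[OF c \<open>m > 0\<close> c_ge, of "1/d - 1"] d by auto
  have denom: "\<forall>t\<in>{0..T}. integral {0..t} c + 1/(-d) \<noteq> 0" using below d by force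
  define z where "z t = 1 / (integral {0..t} c + 1/(-d))" for t
  have c_on: "continuous_on {0..T} c" using c by (rule continuous_on_subset) auto
  note riccati = riccati_explicit_solution[OF c_on denom, folded z_def]
  have "is_solution f 0 (0, 0, -d) {0..T} (\<lambda>t. (0, 0, z t))"
    unfolding is_solution_def using riccati T(1) axis
    by (auto intro!: derivative_eq_intros simp: has_real_derivative_iff_has_vector_derivative
        is_interval_cc)
  moreover have "norm (0::real, 0::real, -d) < \<delta>" using d by (simp add: norm_Pair)
  ultimately have "norm (0::real, 0::real, z T) < 1" using stable T(1) by fastforce
  moreover have "z T = -1" using T by (simp add: z_def)
  ultimately show False by (simp add: norm_Pair)
qed

theorem theorem3:
  fixes a b e :: real and \<alpha>1 \<alpha>2 \<alpha>3 \<alpha>4 \<alpha>5 :: "real \<Rightarrow> real"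
  assumes "continuous_on UNIV \<alpha>1" "continuous_on UNIV \<alpha>2" "continuous_on UNIV \<alpha>3"
      "continuous_on UNIV \<alpha>4" "continuous_on UNIV \<alpha>5"
  shows "((e = 0 \<and> (\<exists>l>-1. \<forall>t\<ge>0. \<alpha>1 t + \<alpha>2 t \<ge> l))
           \<longrightarrow> \<not> lyapunov_stable (S5 a b e \<alpha>1 \<alpha>2 \<alpha>3))
       \<and> ((a = 0 \<and> (\<exists>l>-1. \<forall>t\<ge>0. \<alpha>1 t + \<alpha>2 t \<ge> l))
           \<longrightarrow> \<not> lyapunov_stable (S6 a b \<alpha>1 \<alpha>2 \<alpha>3 \<alpha>4))
       \<and> ((a = 0 \<and> (\<exists>l>-1. \<forall>t\<ge>0. \<alpha>1 t \<ge> l))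
           \<longrightarrow> \<not> lyapunov_stable (S7 a \<alpha>1 \<alpha>2 \<alpha>3 \<alpha>4 \<alpha>5))"
proof (intro conjI impI; elim conjE exE)
  have c12: "continuous_on {0..} (\<lambda>t. 1 + \<alpha>1 t + \<alpha>2 t)"
    using assms by (auto intro!: continuous_intros elim: continuous_on_subset)
  have c1: "continuous_on {0..} (\<lambda>t. 1 + \<alpha>1 t)"
    using assms by (auto intro!: continuous_intros elim: continuous_on_subset)
  fix l :: real assume "l > -1"
  then have "1 + l > 0" by simp
  note unstable = not_lyapunov_stable_if_riccati_on_z_axis[OF _ this]
  show "\<not> lyapunov_stable (S5 a b e \<alpha>1 \<alpha>2 \<alpha>3)"
    if "e = 0" "\<forall>t\<ge>0. \<alpha>1 t + \<alpha>2 t \<ge> l"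
    using that by (intro unstable[OF c12]) (auto simp: S5_def)
  show "\<not> lyapunov_stable (S6 a b \<alpha>1 \<alpha>2 \<alpha>3 \<alpha>4)"
    if "a = 0" "\<forall>t\<ge>0. \<alpha>1 t + \<alpha>2 t \<ge> l"
    using that by (intro unstable[OF c12]) (auto simp: S6_def)
  show "\<not> lyapunov_stable (S7 a \<alpha>1 \<alpha>2 \<alpha>3 \<alpha>4 \<alpha>5)"
    if "a = 0" "\<forall>t\<ge>0. \<alpha>1 t \<ge> l"
    using that by (intro unstable[OF c1]) (auto simp: S7_def)
qed

end
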